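(* For fixed positive integer $t$, the two-variable function $(\rho,k)\mapsto\tilde L_0(\rho,k,t)$ (on $1<\rho<t$, $k>0$) has partial derivatives \[ \frac{\partial}{\partial k}\tilde L_0(\rho,k,t)=\frac{\rho-1}{k}\quad\text{and}\quad \frac{\partial}{\partial\rho}\tilde L_0(\rho,k,t)=\log(\rho k)-y_t(\rho). \]
   Context: $d_i=2^{\binom i2}i!$. For positive integer $t$ and real $1<\rho<t$, $x_t(\rho),y_t(\rho)$ denote the unique reals $x,y$ with $\sum_{i=1}^t e^{x+iy}d_i^{-1}=1$ and $\sum_{i=1}^t ie^{x+iy}d_i^{-1}=\rho$. $\tilde P_{\rho,t}=\{(p_i)_{i=1}^t\in[0,1]^t:\sum_ip_i=1,\sum_iip_i=\rho\}$, and $\tilde L_0(\rho,k,t)=\sup_{\mathbf p\in\tilde P_{\rho,t}}\{\rho\log(\rho k)-\log k-\rho+1-\sum_ip_i\log(p_id_i)\}$ (with $0\log0=0$). Logarithms are natural. *)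

theory Defs
  imports "HOL-Analysis.Analysis"
begin

definition d :: "nat \<Rightarrow> real" where
  "d i = 2 powr (real (i choose 2)) * fact i"

definition xy :: "nat \<Rightarrow> real \<Rightarrow> real \<times> real" where
  "xy t \<rho> = (THE (x, y). (\<Sum>i=1..t. exp (x + real i * y) / d i) = 1 \<and>
                          (\<Sum>i=1..t. real i * exp (x + real i * y) / d i) = \<rho>)"

definition x_t :: "nat \<Rightarrow> real \<Rightarrow> real" where
  "x_t t \<rho> = fst (xy t \<rho>)"

definition y_t :: "nat \<Rightarrow> real \<Rightarrow> real" where
  "y_t t \<rho> = snd (xy t \<rho>)"

definition P_tilde :: "real \<Rightarrow> nat \<Rightarrow> (nat \<Rightarrow> real) set" where
  "P_tilde \<rho> t = {p. (\<forall>i\<in>{1..t}. 0 \<le> p i \<and> p i \<le> 1) \<and> (\<forall>i. i \<notin> {1..t} \<longrightarrow> p i = 0) \<and>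
                     (\<Sum>i=1..t. p i) = 1 \<and> (\<Sum>i=1..t. real i * p i) = \<rho>}"

text \<open>Convention 0 log 0 = 0: Isabelle's ln 0 = 0, so p * ln (p * d) = 0 when p = 0.\<close>
definition L0_tilde :: "real \<Rightarrow> real \<Rightarrow> nat \<Rightarrow> real" where
  "L0_tilde \<rho> k t = (SUP p\<in>P_tilde \<rho> t.
      \<rho> * ln (\<rho> * k) - ln k - \<rho> + 1 - (\<Sum>i=1..t. p i * ln (p i * d i)))"

end

theory Submission
  imports Defs "HOL-Real_Asymp.Real_Asymp"
begin

(* Write M_n y = sum_i i^n e^(i y) / d_i. The equations defining x_t and y_t say that
   e^x = 1 / M_0 y and that the mean M_1 y / M_0 y of the Gibbs weights e^(i y) / d_i is rho.
   This mean is strictly increasing in y (its derivative is the variance of the weights) and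
   sweeps out (1, t), so y_t is its continuous inverse.
   Gibbs' inequality p ln (p d) >= p u + p - e^u / d shows that sum_i p_i ln (p_i d_i) is at
   least rho y - ln M_0 y on P~_rho for every y, with equality for the Gibbs distribution at
   y = y_t rho. So L~_0 = rho ln (rho k) - ln k - rho + 1 - D rho with
   D rho = rho y_t rho - ln M_0 (y_t rho), which gives the k-derivative at once; and the same
   inequality yields D sigma >= D rho + (sigma - rho) y_t rho, so the continuous subgradient
   y_t of D is its derivative. *)

lemma tendsto_exp_sum_dominant:
  fixes c :: "nat \<Rightarrow> real"
  assumes "finite I" "m \<in> I"
    and "\<And>i. i \<in> I \<Longrightarrow> i \<noteq> m \<Longrightarrow> ((\<lambda>y. exp ((real i - real m) * y)) \<longlongrightarrow> 0) F"
  shows "((\<lambda>y. (\<Sum>i\<in>I. c i * exp (real i * y)) / exp (real m * y)) \<longlongrightarrow> c m) F"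
proof -
  have "((\<lambda>y. \<Sum>i\<in>I. c i * exp ((real i - real m) * y))
      \<longlongrightarrow> (\<Sum>i\<in>I. if i = m then c m else 0)) F"
    using assms(3) by (intro tendsto_sum) (auto intro: tendsto_mult_right_zero)
  moreover have "(\<Sum>i\<in>I. c i * exp (real i * y)) / exp (real m * y) =
      (\<Sum>i\<in>I. c i * exp ((real i - real m) * y))" for y
    by (simp add: sum_divide_distrib exp_diff left_diff_distrib)
  ultimately show ?thesis
    using assms(1,2) by simp
qed

lemma mult_ln_mult_ge:
  fixes p D u :: real
  assumes "0 \<le> p" "0 < D"
  shows "p * u + p - exp u / D \<le> p * ln (p * D)"
proof (cases "p = 0")
  case True
  then show ?thesis
    using assms by simp
next
  case False
  then have p: "p > 0"
    using assms by simp
  have "ln (exp u / (p * D)) \<le> exp u / (p * D) - 1"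
    using p assms by (intro ln_le_minus_one) simp
  moreover have "ln (exp u / (p * D)) = u - ln (p * D)"
    using p assms by (simp add: ln_div)
  ultimately have "p * (u - ln (p * D)) \<le> p * (exp u / (p * D) - 1)"
    using p by (intro mult_left_mono) auto
  then show ?thesis
    using p by (simp add: algebra_simps)
qed

lemma has_real_derivative_continuous_subgradient:
  fixes g \<phi> :: "real \<Rightarrow> real"
  assumes "open S" "x \<in> S"
    and subgradient: "\<And>u v. u \<in> S \<Longrightarrow> v \<in> S \<Longrightarrow> g u + (v - u) * \<phi> u \<le> g v"
    and "isCont \<phi> x"
  shows "(g has_real_derivative \<phi> x) (at x)"
proof -
  have bound: "\<bar>(g v - g x) / (v - x) - \<phi> x\<bar> \<le> \<bar>\<phi> v - \<phi> x\<bar>" if "v \<in> S" "v \<noteq> x" for v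
  proof -
    define r where "r = g v - g x - (v - x) * \<phi> x"
    have "0 \<le> r" "r \<le> (v - x) * (\<phi> v - \<phi> x)"
      using subgradient[OF \<open>x \<in> S\<close> \<open>v \<in> S\<close>] subgradient[OF \<open>v \<in> S\<close> \<open>x \<in> S\<close>]
      unfolding r_def by (auto simp: algebra_simps)
    then have "\<bar>r\<bar> \<le> \<bar>v - x\<bar> * \<bar>\<phi> v - \<phi> x\<bar>"
      by (simp add: abs_mult[symmetric])
    moreover have "(g v - g x) / (v - x) - \<phi> x = r / (v - x)"
      using that unfolding r_def by (simp add: field_simps)
    ultimately show ?thesis
      using that by (simp add: abs_divide divide_le_eq mult.commute)
  qed
  have "((\<lambda>v. (g v - g x) / (v - x) - \<phi> x) \<longlongrightarrow> 0) (at x)"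
  proof (rule Lim_null_comparison)
    show "\<forall>\<^sub>F v in at x. norm ((g v - g x) / (v - x) - \<phi> x) \<le> \<bar>\<phi> v - \<phi> x\<bar>"
      using eventually_at_in_open[OF assms(1,2)] by eventually_elim (use bound in auto)
    show "((\<lambda>v. \<bar>\<phi> v - \<phi> x\<bar>) \<longlongrightarrow> 0) (at x)"
      using assms(4) unfolding isCont_def by (intro tendsto_rabs_zero) (simp add: LIM_zero)
  qed
  then show ?thesis
    unfolding has_field_derivative_iff by (simp add: LIM_zero_iff)
qed

lemma d_pos: "d i > 0"
  unfolding d_def by simp

lemma d_neq_0: "d i \<noteq> 0"
  using d_pos[of i] by simp

definition moment :: "nat \<Rightarrow> nat \<Rightarrow> real \<Rightarrow> real" where
  "moment t n y = (\<Sum>i=1..t. real i ^ n * exp (real i * y) / d i)"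

definition mean :: "nat \<Rightarrow> real \<Rightarrow> real" where
  "mean t y = moment t 1 y / moment t 0 y"

lemma moment_pos: "t > 0 \<Longrightarrow> moment t n y > 0"
  unfolding moment_def by (intro sum_pos) (auto simp: d_pos)

lemma moment_eq_sum_exp: "moment t n y = (\<Sum>i=1..t. (real i ^ n / d i) * exp (real i * y))"
  unfolding moment_def by simp

lemma has_real_derivative_moment:
  "(moment t n has_real_derivative moment t (Suc n) y) (at y)"
  unfolding moment_def
  by (intro DERIV_sum) (auto intro!: derivative_eq_intros simp: d_neq_0)

lemma isCont_mean: "t > 0 \<Longrightarrow> isCont (mean t) y"
  unfolding mean_def
  using has_real_derivative_moment[THEN DERIV_isCont] moment_pos[of t 0 y]
  by (intro isCont_divide) auto

lemma moment_lagrange_identity: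
  "2 * (moment t 0 y * moment t 2 y - (moment t 1 y)\<^sup>2) =
    (\<Sum>i=1..t. \<Sum>j=1..t.
      (real i - real j)\<^sup>2 * (exp (real i * y) / d i) * (exp (real j * y) / d j))"
proof -
  define w where "w i = exp (real i * y) / d i" for i
  have moment_w: "moment t n y = (\<Sum>i=1..t. real i ^ n * w i)" for n
    unfolding moment_def w_def by simp
  have "(\<Sum>i=1..t. \<Sum>j=1..t. (real i - real j)\<^sup>2 * w i * w j) =
      (\<Sum>i=1..t. \<Sum>j=1..t. (real i)\<^sup>2 * w i * w j + w i * ((real j)\<^sup>2 * w j)
        - (2 * (real i * w i)) * (real j * w j))"
    by (intro sum.cong refl) (simp add: power2_eq_square algebra_simps)
  also have "\<dots> = (\<Sum>i=1..t. (real i)\<^sup>2 * w i) * (\<Sum>j=1..t. w j)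
      + (\<Sum>i=1..t. w i) * (\<Sum>j=1..t. (real j)\<^sup>2 * w j)
      - (\<Sum>i=1..t. 2 * (real i * w i)) * (\<Sum>j=1..t. real j * w j)"
    by (simp only: sum_subtractf sum.distrib sum_product)
  also have "\<dots> = 2 * (moment t 0 y * moment t 2 y - (moment t 1 y)\<^sup>2)"
    unfolding moment_w sum_distrib_left[symmetric] by (simp add: power2_eq_square)
  finally show ?thesis
    unfolding w_def ..
qed

lemma moment_variance_pos:
  assumes "t \<ge> 2"
  shows "(moment t 1 y)\<^sup>2 < moment t 0 y * moment t 2 y"
proof -
  define w where "w i = exp (real i * y) / d i" for i
  have w: "w i > 0" for i
    unfolding w_def by (simp add: d_pos)
  then have w_nonneg: "w i \<ge> 0" for i
    using less_imp_le by blast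
  have "0 < (\<Sum>i=1..t. \<Sum>j=1..t. (real i - real j)\<^sup>2 * w i * w j)"
  proof (rule sum_pos2[of _ 2])
    show "0 < (\<Sum>j=1..t. (real 2 - real j)\<^sup>2 * w 2 * w j)"
    proof (rule sum_pos2[of _ 1])
      show "0 < (real 2 - real 1)\<^sup>2 * w 2 * w 1"
        using w by simp
      show "0 \<le> (real 2 - real j)\<^sup>2 * w 2 * w j" for j
        by (intro mult_nonneg_nonneg zero_le_power2 w_nonneg)
    qed (use assms in auto)
    show "0 \<le> (\<Sum>j=1..t. (real i - real j)\<^sup>2 * w i * w j)" for i
      by (intro sum_nonneg mult_nonneg_nonneg zero_le_power2 w_nonneg)
  qed (use assms in simp_all)
  then have "0 < 2 * (moment t 0 y * moment t 2 y - (moment t 1 y)\<^sup>2)"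
    unfolding moment_lagrange_identity w_def .
  then show ?thesis
    by simp
qed

lemma has_real_derivative_mean:
  assumes "t > 0"
  shows "(mean t has_real_derivative
           (moment t 0 y * moment t 2 y - (moment t 1 y)\<^sup>2) / (moment t 0 y)\<^sup>2) (at y)"
  using DERIV_divide[OF has_real_derivative_moment[of t 1 y] has_real_derivative_moment[of t 0 y]]
    moment_pos[OF assms, of 0 y]
  unfolding mean_def by (simp add: power2_eq_square numeral_2_eq_2 mult.commute)

lemma mean_strict_mono:
  assumes "t \<ge> 2"
  shows "strict_mono (mean t)"
proof (rule strict_monoI)
  have t: "t > 0"
    using assms by simp
  fix a b :: real
  assume "a < b"
  then show "mean t a < mean t b"
  proof (rule DERIV_pos_imp_increasing)
    fix y
    have "0 < moment t 0 y * moment t 2 y - (moment t 1 y)\<^sup>2"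
      using moment_variance_pos[OF assms, of y] by simp
    moreover have "0 < (moment t 0 y)\<^sup>2"
      using moment_pos[OF t, of 0 y] by simp
    ultimately show "\<exists>D. (mean t has_real_derivative D) (at y) \<and> D > 0"
      using has_real_derivative_mean[OF t, of y] divide_pos_pos by blast
  qed
qed

lemma tendsto_mean_at_bot:
  assumes "t > 0"
  shows "(mean t \<longlongrightarrow> 1) at_bot"
proof -
  have "((\<lambda>y. moment t n y / exp (real 1 * y)) \<longlongrightarrow> real 1 ^ n / d 1) at_bot" for n
    unfolding moment_eq_sum_exp using assms
    by (intro tendsto_exp_sum_dominant) (auto, real_asymp)
  from tendsto_divide[OF this[of 1] this[of 0]] show ?thesis
    by (simp add: d_neq_0 mean_def[abs_def])
qed

lemma tendsto_mean_at_top: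
  assumes "t > 0"
  shows "(mean t \<longlongrightarrow> real t) at_top"
proof -
  have "((\<lambda>y. moment t n y / exp (real t * y)) \<longlongrightarrow> real t ^ n / d t) at_top" for n
    unfolding moment_eq_sum_exp using assms
    by (intro tendsto_exp_sum_dominant) (auto, real_asymp)
  from tendsto_divide[OF this[of 1] this[of 0]] show ?thesis
    by (simp add: d_neq_0 mean_def[abs_def])
qed

lemma mean_surj:
  assumes "1 < \<rho>" "\<rho> < real t"
  shows "\<exists>y. mean t y = \<rho>"
proof -
  have t: "t > 0"
    using assms by simp
  obtain a where a: "mean t a < \<rho>"
    using order_tendstoD(2)[OF tendsto_mean_at_bot[OF t] assms(1)]
    by (auto simp: eventually_at_bot_linorder)
  obtain b0 where b0: "\<And>y. y \<ge> b0 \<Longrightarrow> \<rho> < mean t y"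
    using order_tendstoD(1)[OF tendsto_mean_at_top[OF t] assms(2)]
    by (auto simp: eventually_at_top_linorder)
  define b where "b = max a b0"
  have b: "\<rho> < mean t b" "a \<le> b"
    using b0 unfolding b_def by auto
  have "continuous_on {a..b} (mean t)"
    using isCont_mean[OF t] by (intro continuous_at_imp_continuous_on) auto
  then show ?thesis
    using IVT'[of "mean t" a \<rho> b] a b by force
qed

lemma sum_exp_shift:
  shows "(\<Sum>i=1..t. exp (x + real i * y) / d i) = exp x * moment t 0 y"
    and "(\<Sum>i=1..t. real i * exp (x + real i * y) / d i) = exp x * moment t 1 y"
  unfolding moment_def by (simp_all add: sum_distrib_left exp_add algebra_simps)

lemma xy_mean:
  assumes "t \<ge> 2"
  shows "xy t (mean t y) = (- ln (moment t 0 y), y)"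
  unfolding xy_def
proof (rule the_equality)
  have pos: "moment t 0 y > 0"
    using moment_pos assms by simp
  show "case (- ln (moment t 0 y), y) of (x, y') \<Rightarrow>
      (\<Sum>i=1..t. exp (x + real i * y') / d i) = 1 \<and>
      (\<Sum>i=1..t. real i * exp (x + real i * y') / d i) = mean t y"
    unfolding prod.case sum_exp_shift using pos by (simp add: exp_minus mean_def field_simps)
next
  fix z
  assume eqs: "case z of (x, y') \<Rightarrow>
      (\<Sum>i=1..t. exp (x + real i * y') / d i) = 1 \<and>
      (\<Sum>i=1..t. real i * exp (x + real i * y') / d i) = mean t y"
  obtain x y' where z: "z = (x, y')"
    by (cases z)
  from eqs have norm: "exp x * moment t 0 y' = 1" and first: "exp x * moment t 1 y' = mean t y"
    unfolding z prod.case sum_exp_shift by auto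
  have "mean t y' = (exp x * moment t 1 y') / (exp x * moment t 0 y')"
    unfolding mean_def by simp
  then have "mean t y' = mean t y"
    unfolding norm first by simp
  then have "y' = y"
    using strict_mono_eq[OF mean_strict_mono[OF assms]] by simp
  moreover have "x = - ln (moment t 0 y')"
    using norm by (metis ln_exp ln_inverse inverse_unique mult.commute)
  ultimately show "z = (- ln (moment t 0 y), y)"
    using z by simp
qed

lemma y_t_mean: "t \<ge> 2 \<Longrightarrow> y_t t (mean t y) = y"
  unfolding y_t_def by (simp add: xy_mean)

lemma mean_y_t:
  assumes "1 < \<rho>" "\<rho> < real t"
  shows "mean t (y_t t \<rho>) = \<rho>"
proof -
  obtain y where "mean t y = \<rho>"
    using mean_surj[OF assms] by blast
  moreover have "t \<ge> 2"
    using assms by linarith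
  ultimately show ?thesis
    using y_t_mean[of t y] by simp
qed

lemma isCont_y_t:
  assumes "1 < \<rho>" "\<rho> < real t"
  shows "isCont (y_t t) \<rho>"
proof -
  have t: "t \<ge> 2"
    using assms by linarith
  have "isCont (y_t t) (mean t (y_t t \<rho>))"
  proof (rule isCont_inverse_function[where f = "mean t" and x = "y_t t \<rho>" and d = 1])
    show "y_t t (mean t z) = z" if "\<bar>z - y_t t \<rho>\<bar> \<le> 1" for z
      by (rule y_t_mean[OF t])
    show "isCont (mean t) z" if "\<bar>z - y_t t \<rho>\<bar> \<le> 1" for z
      using t by (intro isCont_mean) simp
  qed simp
  then show ?thesis
    using mean_y_t[OF assms] by simp
qed

definition divergence :: "nat \<Rightarrow> (nat \<Rightarrow> real) \<Rightarrow> real" where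
  "divergence t p = (\<Sum>i=1..t. p i * ln (p i * d i))"

lemma divergence_ge:
  assumes "p \<in> P_tilde \<rho> t" "t > 0"
  shows "\<rho> * y - ln (moment t 0 y) \<le> divergence t p"
proof -
  define Z where "Z = moment t 0 y"
  have Z: "Z > 0"
    unfolding Z_def using assms(2) by (rule moment_pos)
  have nonneg: "\<And>i. i \<in> {1..t} \<Longrightarrow> 0 \<le> p i" and sum1: "(\<Sum>i=1..t. p i) = 1"
    and sum2: "(\<Sum>i=1..t. real i * p i) = \<rho>"
    using assms(1) unfolding P_tilde_def by auto
  have partition: "(\<Sum>i=1..t. exp (real i * y) / d i) = Z"
    unfolding Z_def moment_def by simp
  have summand: "p i * (real i * y - ln Z) + p i - exp (real i * y - ln Z) / d i
      = y * (real i * p i) - ln Z * p i + p i - exp (real i * y) / d i / Z" for i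
  proof -
    have "exp (real i * y - ln Z) / d i = exp (real i * y) / d i / Z"
      using Z by (simp add: exp_diff)
    then show ?thesis
      by (simp add: right_diff_distrib)
  qed
  have "\<rho> * y - ln Z = y * (\<Sum>i=1..t. real i * p i) - ln Z * (\<Sum>i=1..t. p i)
      + (\<Sum>i=1..t. p i) - (\<Sum>i=1..t. exp (real i * y) / d i) / Z"
    unfolding sum1 sum2 partition using Z by simp
  also have "\<dots> = (\<Sum>i=1..t. p i * (real i * y - ln Z) + p i - exp (real i * y - ln Z) / d i)"
    unfolding summand sum.distrib sum_subtractf sum_distrib_left sum_divide_distrib ..
  also have "\<dots> \<le> divergence t p"
    unfolding divergence_def using nonneg by (intro sum_mono mult_ln_mult_ge) (auto simp: d_pos)
  finally show ?thesis
    unfolding Z_def .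
qed

definition gibbs :: "nat \<Rightarrow> real \<Rightarrow> nat \<Rightarrow> real" where
  "gibbs t y i = (if i \<in> {1..t} then exp (real i * y) / (d i * moment t 0 y) else 0)"

lemma sum_gibbs:
  assumes "t > 0"
  shows "(\<Sum>i=1..t. gibbs t y i) = 1" and "(\<Sum>i=1..t. real i * gibbs t y i) = mean t y"
proof -
  have weighted: "(\<Sum>i=1..t. f i * gibbs t y i) =
      (\<Sum>i=1..t. f i * exp (real i * y) / d i) / moment t 0 y"
    for f :: "nat \<Rightarrow> real"
    by (simp add: gibbs_def sum_divide_distrib)
  show "(\<Sum>i=1..t. gibbs t y i) = 1"
    using weighted[of "\<lambda>_. 1"] moment_pos[OF assms, of 0 y] by (simp add: moment_def)
  show "(\<Sum>i=1..t. real i * gibbs t y i) = mean t y"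
    using weighted[of real] by (simp add: mean_def moment_def)
qed

lemma gibbs_in_P_tilde:
  assumes "t > 0"
  shows "gibbs t y \<in> P_tilde (mean t y) t"
proof -
  have nonneg: "0 \<le> gibbs t y i" for i
    using moment_pos[OF assms, of 0 y] d_pos[of i] by (simp add: gibbs_def)
  have le1: "gibbs t y i \<le> 1" if "i \<in> {1..t}" for i
  proof -
    have "gibbs t y i \<le> (\<Sum>j=1..t. gibbs t y j)"
      using that nonneg by (intro member_le_sum) auto
    then show ?thesis
      using sum_gibbs(1)[OF assms] by simp
  qed
  have outside: "gibbs t y i = 0" if "i \<notin> {1..t}" for i
    unfolding gibbs_def using that by (simp only: if_False)
  show ?thesis
    unfolding P_tilde_def mem_Collect_eq using nonneg le1 outside sum_gibbs[OF assms] by blast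
qed

lemma divergence_gibbs:
  assumes "t > 0"
  shows "divergence t (gibbs t y) = mean t y * y - ln (moment t 0 y)"
proof -
  have Z: "moment t 0 y > 0"
    using moment_pos[OF assms] .
  have "gibbs t y i * ln (gibbs t y i * d i) =
      y * (real i * gibbs t y i) - ln (moment t 0 y) * gibbs t y i" if "i \<in> {1..t}" for i
  proof -
    have ln_eq: "ln (gibbs t y i * d i) = real i * y - ln (moment t 0 y)"
      using that Z d_pos[of i] by (simp add: gibbs_def ln_div)
    show ?thesis
      unfolding ln_eq by (simp add: algebra_simps)
  qed
  then have "divergence t (gibbs t y) =
      y * (\<Sum>i=1..t. real i * gibbs t y i) - ln (moment t 0 y) * (\<Sum>i=1..t. gibbs t y i)"
    unfolding divergence_def by (simp add: sum_subtractf sum_distrib_left)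
  then show ?thesis
    using sum_gibbs[OF assms] by simp
qed

definition min_divergence :: "nat \<Rightarrow> real \<Rightarrow> real" where
  "min_divergence t \<rho> = \<rho> * y_t t \<rho> - ln (moment t 0 (y_t t \<rho>))"

lemma gibbs_y_t:
  assumes "1 < \<rho>" "\<rho> < real t"
  shows "gibbs t (y_t t \<rho>) \<in> P_tilde \<rho> t"
    and "divergence t (gibbs t (y_t t \<rho>)) = min_divergence t \<rho>"
proof -
  have t: "t > 0"
    using assms by simp
  show "gibbs t (y_t t \<rho>) \<in> P_tilde \<rho> t"
    using gibbs_in_P_tilde[OF t] mean_y_t[OF assms] by metis
  show "divergence t (gibbs t (y_t t \<rho>)) = min_divergence t \<rho>"
    unfolding divergence_gibbs[OF t] mean_y_t[OF assms] min_divergence_def ..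
qed

lemma L0_tilde_eq:
  assumes "1 < \<rho>" "\<rho> < real t"
  shows "L0_tilde \<rho> k t = \<rho> * ln (\<rho> * k) - ln k - \<rho> + 1 - min_divergence t \<rho>"
  unfolding L0_tilde_def divergence_def[symmetric]
proof (rule cSup_eq_maximum)
  let ?c = "\<rho> * ln (\<rho> * k) - ln k - \<rho> + 1"
  show "?c - min_divergence t \<rho> \<in> (\<lambda>p. ?c - divergence t p) ` P_tilde \<rho> t"
    using gibbs_y_t[OF assms] by (intro image_eqI[where x = "gibbs t (y_t t \<rho>)"]) auto
  show "z \<le> ?c - min_divergence t \<rho>"
    if "z \<in> (\<lambda>p. ?c - divergence t p) ` P_tilde \<rho> t" for z
    using that divergence_ge[of _ \<rho> t "y_t t \<rho>"] assms unfolding min_divergence_def by force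
qed

lemma min_divergence_supporting_line:
  assumes "1 < \<rho>" "\<rho> < real t" "1 < \<sigma>" "\<sigma> < real t"
  shows "min_divergence t \<rho> + (\<sigma> - \<rho>) * y_t t \<rho> \<le> min_divergence t \<sigma>"
proof -
  have "min_divergence t \<rho> + (\<sigma> - \<rho>) * y_t t \<rho> =
      \<sigma> * y_t t \<rho> - ln (moment t 0 (y_t t \<rho>))"
    unfolding min_divergence_def by (simp add: algebra_simps)
  also have "\<dots> \<le> divergence t (gibbs t (y_t t \<sigma>))"
    using assms by (intro divergence_ge gibbs_y_t) auto
  also have "\<dots> = min_divergence t \<sigma>"
    using gibbs_y_t(2)[OF assms(3,4)] .
  finally show ?thesis .
qed

lemma has_real_derivative_min_divergence:
  assumes "1 < \<rho>" "\<rho> < real t"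
  shows "(min_divergence t has_real_derivative y_t t \<rho>) (at \<rho>)"
proof (rule has_real_derivative_continuous_subgradient[where S = "{1<..<real t}"])
  show "min_divergence t u + (v - u) * y_t t u \<le> min_divergence t v"
    if "u \<in> {1<..<real t}" "v \<in> {1<..<real t}" for u v
    using that by (intro min_divergence_supporting_line) auto
qed (use assms isCont_y_t in auto)

theorem lemma34:
  fixes t :: nat and \<rho> k :: real
  assumes "t > 0" and "1 < \<rho>" and "\<rho> < real t" and "k > 0"
  shows "((\<lambda>k'. L0_tilde \<rho> k' t) has_real_derivative ((\<rho> - 1) / k)) (at k)
       \<and> ((\<lambda>\<rho>'. L0_tilde \<rho>' k t) has_real_derivative (ln (\<rho> * k) - y_t t \<rho>)) (at \<rho>)"
proof
  have "((\<lambda>k'. \<rho> * ln (\<rho> * k') - ln k' - \<rho> + 1 - min_divergence t \<rho>)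
      has_real_derivative (\<rho> - 1) / k) (at k)"
    using assms by (auto intro!: derivative_eq_intros simp: field_simps)
  then show "((\<lambda>k'. L0_tilde \<rho> k' t) has_real_derivative (\<rho> - 1) / k) (at k)"
    by (simp add: L0_tilde_eq[OF assms(2,3)])
next
  have "((\<lambda>r. r * ln (r * k) - ln k - r + 1 - min_divergence t r) has_real_derivative
      ln (\<rho> * k) - y_t t \<rho>) (at \<rho>)"
    using assms
    by (auto intro!: derivative_eq_intros has_real_derivative_min_divergence simp: field_simps)
  then show "((\<lambda>\<rho>'. L0_tilde \<rho>' k t) has_real_derivative ln (\<rho> * k) - y_t t \<rho>) (at \<rho>)"
    by (rule has_field_derivative_transform_within_open[where S = "{1<..<real t}"])
      (use assms L0_tilde_eq in auto)
qed

end
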